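(* Let $C,\le$ and $\widetilde C,\le'$ satisfy: $C\subset Ob(CC(R,LM))$ is closed under $ft$; $\le$ is a transitive relation on $C$ with $\Gamma\le\Gamma'\Rightarrow l(\Gamma)=l(\Gamma')$ and, for $\Gamma,F\in C$ with $ft(\Gamma)\le F$, $\sigma(\Gamma,F)\in C$ and $\Gamma\le\sigma(\Gamma,F)$; $\widetilde C\subset\widetilde{Ob}(CC(R,LM))$; $\le'$ is a transitive relation on $\widetilde C$ with $\mathcal J\le'\mathcal J'\Rightarrow\partial\mathcal J\le\partial\mathcal J'$ and, for $\mathcal J\in\widetilde C$, $F\in C$ with $\partial\mathcal J\le F$, $\widetilde\sigma(\mathcal J,F)\in\widetilde C$ and $\mathcal J\le'\widetilde\sigma(\mathcal J,F)$. Then: (1) $(\Gamma\vdash o:T)\le'(\Gamma\vdash o':T)$ and $(\Gamma,T)\le(\Gamma',T')$ imply $(\Gamma\vdash o:T)\le'(\Gamma'\vdash o':T')$; (2) if moreover $\le$ is symmetric, then $(\Gamma\vdash o:T)\le'(\Gamma'\vdash o':T')$ implies $(\Gamma\vdash o:T)\le'(\Gamma\vdash o':T)$.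
   Context: $[n]=\{1,\dots,n\}$; $R$ monad on Sets, $LM$ a left $R$-module with values in Sets. $Ob(CC(R,LM))$: sequences $(T_1,\dots,T_n)$, $T_j\in LM([j-1])$; $l$ = length; $ft$ drops the last entry; $(\Gamma,T)$ is $\Gamma$ extended by $T$. $\widetilde{Ob}(CC(R,LM))$: elements written $(\Gamma\vdash t:T)$ with $\Gamma=(T_1,\dots,T_n)$ an object, $T\in LM([n])$, $t\in R([n])$; $\partial(\Gamma\vdash t:T)=(\Gamma,T)$. $\sigma((T_1,\dots,T_{n+k}),(T'_1,\dots,T'_n))=(T'_1,\dots,T'_n,T_{n+1},\dots,T_{n+k})$ for $k>0$. For $\mathcal J=(T_1,\dots,T_{n+k-1}\vdash t:T_{n+k})$, $\Gamma'=(T'_1,\dots,T'_n)$, $n\ge1,k\ge0$: $\widetilde\sigma(\mathcal J,\Gamma')=(T'_1,\dots,T'_n,T_{n+1},\dots,T_{n+k-1}\vdash t:T_{n+k})$ if $k>0$, and $(T'_1,\dots,T'_{n-1}\vdash t:T'_n)$ if $k=0$. *)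

theory Defs
  imports Main
begin

(* Only the underlying sets R([n]) and LM([n]) enter
   the statement; they are given as families R :: nat => 'r set, LM :: nat => 'l set
   (R n stands for R([n]), LM n for LM([n])).
   Objects: lists [T_1,...,T_n] with T_j in LM([j-1]), i.e. xs!j : LM j (0-indexed).
   Elements of Ob~: triples (Gamma, t, T) written (Gamma |- t : T). *)

definition CC_Ob :: "(nat \<Rightarrow> 'l set) \<Rightarrow> 'l list set" where
  "CC_Ob LM = {xs. \<forall>j < length xs. xs ! j \<in> LM j}"

definition CC_tOb :: "(nat \<Rightarrow> 'r set) \<Rightarrow> (nat \<Rightarrow> 'l set) \<Rightarrow> ('l list \<times> 'r \<times> 'l) set" where
  "CC_tOb R LM = {(G, t, T). G \<in> CC_Ob LM \<and> T \<in> LM (length G) \<and> t \<in> R (length G)}"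

definition ft :: "'l list \<Rightarrow> 'l list" where
  "ft G = butlast G"

definition bnd :: "('l list \<times> 'r \<times> 'l) \<Rightarrow> 'l list" where
  "bnd J = (case J of (G, t, T) \<Rightarrow> G @ [T])"

(* sigma((T_1..T_{n+k}), (T'_1..T'_n)) = (T'_1..T'_n, T_{n+1}..T_{n+k}), used for k>0 *)
definition csigma :: "'l list \<Rightarrow> 'l list \<Rightarrow> 'l list" where
  "csigma G G' = G' @ drop (length G') G"

definition tsigma :: "('l list \<times> 'r \<times> 'l) \<Rightarrow> 'l list \<Rightarrow> ('l list \<times> 'r \<times> 'l)" where
  "tsigma J G' = (case J of (G, t, T) \<Rightarrow>
      (if length G' < length (G @ [T]) then (G' @ drop (length G') G, t, T)
       else (butlast G', t, last G')))"

end

theory Submission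
  imports Defs
begin

text \<open>If \<open>\<J> = (\<Gamma> \<turnstile> o : T)\<close> lies in \<open>C~\<close> and \<open>(\<Gamma>, T) \<le> (\<Gamma>', T')\<close>, then
  \<open>\<J> \<le>' \<sigma>~(\<J>, (\<Gamma>', T')) = (\<Gamma>' \<turnstile> o : T')\<close>: since \<open>\<le>\<close> preserves length, this is the
  case \<open>k = 0\<close> of \<open>\<sigma>~\<close>, which just replaces the boundary. Transitivity of \<open>\<le>'\<close> then
  gives (1) directly, and (2) after reversing \<open>\<partial>\<J> \<le> \<partial>\<J>'\<close> by symmetry.\<close>

lemma tsigma_same_length:
  assumes "length G' = length G"
  shows "tsigma (G, t, T) (G' @ [T']) = (G', t, T')"
  using assms by (simp add: tsigma_def)

lemma le'_transport_boundary:
  assumes le_rel: "\<And>G G'. le G G' \<Longrightarrow> G \<in> C \<and> G' \<in> C"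
    and le_len: "\<And>G G'. le G G' \<Longrightarrow> length G = length G'"
    and le'_sigma: "\<And>J F. J \<in> tC \<Longrightarrow> F \<in> C \<Longrightarrow> le (bnd J) F \<Longrightarrow>
                     tsigma J F \<in> tC \<and> le' J (tsigma J F)"
    and J: "(G, t, T) \<in> tC"
    and le_bnd: "le (G @ [T]) (G' @ [T'])"
  shows "le' (G, t, T) (G', t, T')"
proof -
  have "G' @ [T'] \<in> C" using le_rel le_bnd by blast
  then have "le' (G, t, T) (tsigma (G, t, T) (G' @ [T']))"
    using le'_sigma J le_bnd by (simp add: bnd_def)
  moreover have "length G' = length G"
    using le_len[OF le_bnd] by simp
  ultimately show ?thesis by (simp add: tsigma_same_length)
qed

theorem lemma6p10:
  fixes R :: "nat \<Rightarrow> 'r set" and LM :: "nat \<Rightarrow> 'l set"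
    and C :: "'l list set" and le :: "'l list \<Rightarrow> 'l list \<Rightarrow> bool"
    and tC :: "('l list \<times> 'r \<times> 'l) set"
    and le' :: "('l list \<times> 'r \<times> 'l) \<Rightarrow> ('l list \<times> 'r \<times> 'l) \<Rightarrow> bool"
  assumes C_sub: "C \<subseteq> CC_Ob LM"
    and C_ft: "\<And>G. G \<in> C \<Longrightarrow> G \<noteq> [] \<Longrightarrow> ft G \<in> C"
    and le_rel: "\<And>G G'. le G G' \<Longrightarrow> G \<in> C \<and> G' \<in> C"
    and le_trans: "\<And>G1 G2 G3. le G1 G2 \<Longrightarrow> le G2 G3 \<Longrightarrow> le G1 G3"
    and le_len: "\<And>G G'. le G G' \<Longrightarrow> length G = length G'"
    and le_sigma: "\<And>G F. G \<in> C \<Longrightarrow> F \<in> C \<Longrightarrow> G \<noteq> [] \<Longrightarrow> le (ft G) F \<Longrightarrow>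
                     csigma G F \<in> C \<and> le G (csigma G F)"
    and tC_sub: "tC \<subseteq> CC_tOb R LM"
    and le'_rel: "\<And>J J'. le' J J' \<Longrightarrow> J \<in> tC \<and> J' \<in> tC"
    and le'_trans: "\<And>J1 J2 J3. le' J1 J2 \<Longrightarrow> le' J2 J3 \<Longrightarrow> le' J1 J3"
    and le'_bnd: "\<And>J J'. le' J J' \<Longrightarrow> le (bnd J) (bnd J')"
    and le'_sigma: "\<And>J F. J \<in> tC \<Longrightarrow> F \<in> C \<Longrightarrow> le (bnd J) F \<Longrightarrow>
                     tsigma J F \<in> tC \<and> le' J (tsigma J F)"
  shows "(\<forall>G G' o1 o2 T T'. le' (G, o1, T) (G, o2, T) \<and> le (G @ [T]) (G' @ [T'])
            \<longrightarrow> le' (G, o1, T) (G', o2, T'))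
       \<and> ((\<forall>G G'. le G G' \<longrightarrow> le G' G) \<longrightarrow>
            (\<forall>G G' o1 o2 T T'. le' (G, o1, T) (G', o2, T') \<longrightarrow> le' (G, o1, T) (G, o2, T)))"
proof -
  note transport = le'_transport_boundary[of le C tC le', OF le_rel le_len le'_sigma]
  show ?thesis
  proof (intro conjI allI impI)
    fix G G' o1 o2 T T'
    assume "le' (G, o1, T) (G, o2, T) \<and> le (G @ [T]) (G' @ [T'])"
    then have o12: "le' (G, o1, T) (G, o2, T)" and le_bnd: "le (G @ [T]) (G' @ [T'])"
      by blast+
    have "le' (G, o2, T) (G', o2, T')"
      using transport le'_rel[OF o12] le_bnd by blast
    with o12 show "le' (G, o1, T) (G', o2, T')" by (rule le'_trans)
  next
    fix G G' o1 o2 T T'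
    assume sym: "\<forall>G G'. le G G' \<longrightarrow> le G' G" and h: "le' (G, o1, T) (G', o2, T')"
    have "le (G' @ [T']) (G @ [T])"
      using sym le'_bnd[OF h] by (simp add: bnd_def)
    then have "le' (G', o2, T') (G, o2, T)"
      using transport le'_rel[OF h] by blast
    with h show "le' (G, o1, T) (G, o2, T)" by (rule le'_trans)
  qed
qed

end
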